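(* Let $\lambda>1$ and let $\psi=\Gamma'/\Gamma$ be the digamma function. Then the function $x\mapsto\lambda+x\big(\psi(x)-\psi(x+\lambda)\big)$, $x>0$, belongs to $\mathcal S_3$.
   Context: For $\tau>0$, $\mathcal S_\tau$ is the class of functions on $(0,\infty)$ of the form $g(x)=\int_0^\infty\frac{d\mu(t)}{(t+x)^{\tau}}+c$, where $\mu$ is a positive measure on $[0,\infty)$ making the integral converge for all $x>0$ and $c\ge 0$. *)

theory Defs
  imports "HOL-Analysis.Analysis"
begin

definition S_class :: "real \<Rightarrow> (real \<Rightarrow> real) set" where
  "S_class \<tau> = {g. \<exists>(\<mu>::real measure) (c::real).
      sets \<mu> = sets (restrict_space borel {0..}) \<and> c \<ge> 0 \<and>
      (\<forall>x>0. integrable \<mu> (\<lambda>t. 1 / (t + x) powr \<tau>) \<and>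
              g x = (\<integral>t. 1 / (t + x) powr \<tau> \<partial>\<mu>) + c)}"

end

theory Submission
  imports Defs "HOL-Real_Asymp.Real_Asymp"
begin

text \<open>
  Take c = 0 and \<mu> = \<rho>(t) dt on [0, \<infinity>) with the piecewise linear density
  \<rho>(t) = 2 \<Sum>{j \<ge> 0} j (t - j)_+ - 2 \<Sum>{n \<ge> 0} (\<lambda> + n) (t - \<lambda> - n)_+.
  Between consecutive integers the first sum is affine and the second convex, so \<rho> is concave
  there; at the integers it is nonnegative by direct computation, hence \<rho> \<ge> 0.

  As the integral of 2 a (t - a)_+ / (t + x)^3 over [0, N] is a (N - a)^2 / ((a + x) (N + x)^2),
  the integral of \<rho>(t) / (t + x)^3 over [0, M + k], k = \<lfloor>\<lambda>\<rfloor>, is an explicit finite sum.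
  Pairing the kinks at n + k and \<lambda> + n turns it into a partial sum of the series for
  \<psi>(x + k) - \<psi>(x + \<lambda>) plus a boundary term tending to \<lambda> - k, so it tends to
  \<lambda> + x (\<psi>(x) - \<psi>(x + \<lambda>)); the boundary term is lost if one integrates the series for \<rho>
  term by term over [0, \<infinity>). Monotone convergence gives the integral over [0, \<infinity>).
\<close>

lemma double_gauss_sum_lessThan: "2 * (\<Sum>i<n. real i) = real n * (real n - 1)"
  by (induction n) (simp_all add: algebra_simps)

lemma sum_of_nat_div_of_nat_add:
  assumes "0 < x"
  shows "(\<Sum>j<k. real j / (real j + x)) = real k - x * (\<Sum>j<k. 1 / (x + real j))"
proof -
  have "real j / (real j + x) = 1 - x / (x + real j)" for j
  proof -
    have "0 < x + real j"
      using assms by (simp add: add_pos_nonneg)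
    then show ?thesis
      by (simp add: add.commute field_simps)
  qed
  then show ?thesis
    by (simp add: sum_subtractf sum_distrib_left)
qed

lemma has_bochner_integral_atLeast_monotone_limit:
  fixes f :: "real \<Rightarrow> real" and b :: "nat \<Rightarrow> real"
  assumes f [measurable]: "f \<in> borel_measurable borel"
    and nonneg: "\<And>t. a \<le> t \<Longrightarrow> 0 \<le> f t"
    and b: "mono b" "filterlim b at_top sequentially"
    and I: "\<And>n. (f has_integral I n) {a..b n}"
    and lim: "I \<longlonglongrightarrow> L"
  shows "has_bochner_integral (restrict_space lborel {a..}) f L"
proof -
  have "has_bochner_integral lborel (\<lambda>t. indicator {a..b n} t * f t) (I n)" for n
  proof (rule has_bochner_integral_nn_integral)
    show "0 \<le> I n"
      using I by (rule has_integral_nonneg) (simp add: nonneg)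
    show "(\<integral>\<^sup>+t. ennreal (indicator {a..b n} t * f t) \<partial>lborel) = ennreal (I n)"
      by (rule nn_integral_has_integral_lebesgue[OF _ I]) (simp add: nonneg)
  qed (auto simp: indicator_def nonneg)
  then have "has_bochner_integral lborel (\<lambda>t. indicator {a..} t * f t) L"
    using lim
  proof (intro has_bochner_integral_monotone_convergence)
    show "AE t in lborel. mono (\<lambda>n. indicator {a..b n} t * f t)"
    proof (rule AE_I2, rule monoI)
      fix t and m n :: nat
      assume "m \<le> n"
      with b(1) have "b m \<le> b n"
        by (rule monoD)
      then show "indicator {a..b m} t * f t \<le> indicator {a..b n} t * f t"
        using nonneg[of t] by (auto simp: indicator_def)
    qed
    show "AE t in lborel. (\<lambda>n. indicator {a..b n} t * f t) \<longlonglongrightarrow> indicator {a..} t * f t"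
    proof (rule AE_I2, rule tendsto_eventually)
      fix t
      show "\<forall>\<^sub>F n in sequentially. indicator {a..b n} t * f t = indicator {a..} t * f t"
        using filterlim_at_top[THEN iffD1, OF b(2), rule_format, of t]
        by eventually_elim (simp add: indicator_def)
    qed
  qed (auto simp: has_bochner_integral_iff)
  then show ?thesis
    by (simp add: has_bochner_integral_restrict_space)
qed

section \<open>The positive part and its kernel integrals\<close>

definition ramp :: "real \<Rightarrow> real" where
  "ramp s = max 0 s"

lemma ramp_nonneg: "0 \<le> ramp s"
  by (simp add: ramp_def)

lemma ramp_eq_0: "s \<le> 0 \<Longrightarrow> ramp s = 0"
  by (simp add: ramp_def)

lemma ramp_eq_self: "0 \<le> s \<Longrightarrow> ramp s = s"
  by (simp add: ramp_def)

lemma ramp_convex: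
  assumes "0 \<le> a" "0 \<le> b" "a + b = 1"
  shows "ramp (a * u + b * v) \<le> a * ramp u + b * ramp v"
proof -
  have "a * u \<le> a * ramp u" "b * v \<le> b * ramp v"
    using assms by (auto intro!: mult_left_mono simp: ramp_def)
  moreover have "0 \<le> a * ramp u + b * ramp v"
    using assms by (simp add: ramp_nonneg)
  ultimately show ?thesis
    by (simp add: ramp_def)
qed

lemma ramp_affine_between_integers:
  assumes "real m \<le> t" "t \<le> real m + 1"
  shows "ramp (t - real j)
    = (real m + 1 - t) * ramp (real m - real j) + (t - real m) * ramp (real m + 1 - real j)"
proof (cases "j \<le> m")
  case True
  then have "ramp (t - real j) = t - real j" "ramp (real m - real j) = real m - real j"
    "ramp (real m + 1 - real j) = real m + 1 - real j"
    using assms by (simp_all add: ramp_eq_self)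
  then show ?thesis
    by (simp only:) (simp add: algebra_simps)
next
  case False
  then show ?thesis
    using assms by (simp add: ramp_eq_0)
qed

definition ramp_kernel_integral :: "real \<Rightarrow> real \<Rightarrow> real \<Rightarrow> real" where
  "ramp_kernel_integral N x a = a * (N - a)^2 / ((a + x) * (N + x)^2)"

lemma has_integral_ramp_kernel:
  assumes "0 \<le> a" "a \<le> N" "0 < x"
  shows "((\<lambda>t. 2 * a * ramp (t - a) / (t + x)^3) has_integral ramp_kernel_integral N x a) {0..N}"
proof -
  define G where "G t = a / (a + x) * ((t - a) / (t + x))^2" for t
  have "((\<lambda>t. 2 * a * ramp (t - a) / (t + x)^3) has_integral G N - G a) {a..N}"
  proof (rule fundamental_theorem_of_calculus)
    fix t assume t: "t \<in> {a..N}"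
    have tx: "0 < t + x"
      using t assms by simp
    have "((\<lambda>t. (t - a) / (t + x)) has_real_derivative (a + x) / (t + x)^2) (at t)"
      using tx by (auto intro!: derivative_eq_intros simp: power2_eq_square field_simps)
    from DERIV_cmult[OF DERIV_power[OF this], of "a / (a + x)" 2]
    have "(G has_real_derivative a / (a + x) * (2 * ((a + x) / (t + x)^2 * ((t - a) / (t + x)))))
        (at t)"
      unfolding G_def by simp
    moreover have "a / (a + x) * (2 * ((a + x) / (t + x)^2 * ((t - a) / (t + x))))
        = 2 * a * (t - a) / (t + x)^3"
      using tx assms by (simp add: power2_eq_square power3_eq_cube)
    ultimately have "(G has_real_derivative 2 * a * (t - a) / (t + x)^3) (at t)"
      by simp
    then show "(G has_vector_derivative 2 * a * ramp (t - a) / (t + x)^3) (at t within {a..N})"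
      using t by (simp add: ramp_eq_self has_real_derivative_iff_has_vector_derivative[symmetric]
          has_field_derivative_at_within)
  qed (use assms in simp)
  moreover have "((\<lambda>t. 2 * a * ramp (t - a) / (t + x)^3) has_integral 0) {0..a}"
    by (rule has_integral_eq[OF _ has_integral_0]) (simp add: ramp_eq_0)
  ultimately have "((\<lambda>t. 2 * a * ramp (t - a) / (t + x)^3) has_integral 0 + (G N - G a)) {0..N}"
    using assms by (intro has_integral_combine[of 0 a N]) auto
  then show ?thesis
    by (simp add: G_def ramp_kernel_integral_def power_divide)
qed

lemma ramp_kernel_integral_eq:
  assumes "a + x \<noteq> 0" "N + x \<noteq> 0"
  shows "ramp_kernel_integral N x a = ((N + x - a)^2 + a * x) / (N + x)^2 - x / (a + x)"
proof -
  have "a * (N - a)^2 = ((N + x - a)^2 + a * x) * (a + x) - x * (N + x)^2"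
    by (simp add: algebra_simps power2_eq_square)
  then show ?thesis
    using assms by (simp add: ramp_kernel_integral_def diff_divide_distrib)
qed

lemma sum_ramp_kernel_integral_pairs:
  assumes "0 < x" "0 \<le> b" "0 \<le> c"
  shows "(\<Sum>n<M. ramp_kernel_integral (real M + b) x (real n + b)
                - ramp_kernel_integral (real M + b) x (real n + c))
    = (c - b) * real M * (real M + b + x - c + 1) / (real M + b + x)^2
      + x * (\<Sum>n<M. 1 / (x + c + real n) - 1 / (x + b + real n))"
proof -
  define T where "T = real M + b + x"
  have T: "0 < T"
    using assms by (simp add: T_def add_nonneg_pos)
  have pair: "ramp_kernel_integral (real M + b) x (real n + b)
      - ramp_kernel_integral (real M + b) x (real n + c)
      = (c - b) * (2 * T - b - c - x) / T^2 - (c - b) / T^2 * (2 * real n)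
        + x * (1 / (x + c + real n) - 1 / (x + b + real n))" for n
  proof -
    have "ramp_kernel_integral (real M + b) x (real n + b)
        = ((T - (real n + b))^2 + (real n + b) * x) / T^2 - x / (x + b + real n)"
      using assms by (subst ramp_kernel_integral_eq) (auto simp: T_def algebra_simps)
    moreover have "ramp_kernel_integral (real M + b) x (real n + c)
        = ((T - (real n + c))^2 + (real n + c) * x) / T^2 - x / (x + c + real n)"
      using assms by (subst ramp_kernel_integral_eq) (auto simp: T_def algebra_simps)
    moreover have "((T - (real n + b))^2 + (real n + b) * x) - ((T - (real n + c))^2 + (real n + c) * x)
        = (c - b) * (2 * T - b - c - x) - (c - b) * (2 * real n)"
      by (simp add: algebra_simps power2_eq_square)
    ultimately show ?thesis
      by (simp add: diff_divide_distrib[symmetric] right_diff_distrib)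
  qed
  have "(\<Sum>n<M. ramp_kernel_integral (real M + b) x (real n + b)
          - ramp_kernel_integral (real M + b) x (real n + c))
      = real M * ((c - b) * (2 * T - b - c - x) / T^2) - (c - b) / T^2 * (2 * (\<Sum>n<M. real n))
        + x * (\<Sum>n<M. 1 / (x + c + real n) - 1 / (x + b + real n))"
    unfolding pair by (simp add: sum.distrib sum_subtractf sum_distrib_left right_diff_distrib)
  also have "real M * ((c - b) * (2 * T - b - c - x) / T^2) - (c - b) / T^2 * (2 * (\<Sum>n<M. real n))
      = (real M * ((c - b) * (2 * T - b - c - x)) - (c - b) * (real M * (real M - 1))) / T^2"
    unfolding double_gauss_sum_lessThan using T by (simp add: field_simps)
  also have "\<dots> = (c - b) * real M * (real M + b + x - c + 1) / T^2"
    by (simp add: T_def algebra_simps)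
  finally show ?thesis
    by (simp add: T_def)
qed

lemma ramp_kernel_integral_tendsto: "(\<lambda>M. ramp_kernel_integral (real M + c) x a) \<longlonglongrightarrow> a / (a + x)"
proof -
  have "(\<lambda>M. ((real M + c - a) / (real M + c + x))^2) \<longlonglongrightarrow> 1"
    by real_asymp
  from tendsto_mult_left[OF this, of "a / (a + x)"] show ?thesis
    by (simp add: ramp_kernel_integral_def power_divide)
qed

section \<open>The density\<close>

definition rho_trunc :: "real \<Rightarrow> nat \<Rightarrow> real \<Rightarrow> real" where
  "rho_trunc lam J t = 2 * (\<Sum>j<J. real j * ramp (t - real j))
                     - 2 * (\<Sum>n<J. (lam + real n) * ramp (t - lam - real n))"

definition rho :: "real \<Rightarrow> real \<Rightarrow> real" where
  "rho lam t = rho_trunc lam (nat \<lceil>t\<rceil>) t"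

lemma rho_trunc_stable:
  assumes "0 < lam" "t \<le> real J" "J \<le> J'"
  shows "rho_trunc lam J' t = rho_trunc lam J t"
  using assms(3)
proof (induction J' rule: dec_induct)
  case (step m)
  then have "t \<le> real m"
    using assms(2) by linarith
  with assms(1) step.IH show ?case
    by (simp add: rho_trunc_def ramp_eq_0)
qed simp

lemma rho_eq_rho_trunc: "0 < lam \<Longrightarrow> t \<le> real J \<Longrightarrow> rho lam t = rho_trunc lam J t"
  unfolding rho_def by (rule rho_trunc_stable[symmetric]) linarith+

lemma rho_trunc_split:
  assumes "real k \<le> lam" "t \<le> real (M + k)"
  shows "rho_trunc lam (M + k) t = 2 * (\<Sum>j<k. real j * ramp (t - real j))
     + 2 * (\<Sum>n<M. real (n + k) * ramp (t - real (n + k)) - (lam + real n) * ramp (t - lam - real n))"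
proof -
  have kinks: "(\<Sum>j<M + k. f j) = (\<Sum>j<k. f j) + (\<Sum>n<M. f (n + k))" for f :: "nat \<Rightarrow> real"
    by (induction M) simp_all
  have "(\<Sum>n<M + k. (lam + real n) * ramp (t - lam - real n))
      = (\<Sum>n<M. (lam + real n) * ramp (t - lam - real n))"
    by (rule sum.mono_neutral_right) (use assms in \<open>auto intro!: ramp_eq_0\<close>)
  then show ?thesis
    unfolding rho_trunc_def kinks by (simp add: sum_subtractf algebra_simps)
qed

lemma rho_of_nat_add:
  assumes "0 < lam" "real k \<le> lam" "lam \<le> real k + 1"
  shows "rho lam (real (M + k))
    = 2 * (\<Sum>j<k. real j * ramp (real (M + k) - real j)) + 2 * ((lam - real k) * real M * (lam - 1))"
proof -
  define \<theta> where "\<theta> = lam - real k"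
  have pair: "real (n + k) * ramp (real (M + k) - real (n + k))
      - (lam + real n) * ramp (real (M + k) - lam - real n)
      = \<theta> * (2 * real n) + \<theta> * (real k - real M + \<theta>)" if "n < M" for n
  proof -
    have "ramp (real (M + k) - real (n + k)) = real M - real n"
      using that by (simp add: ramp_eq_self)
    moreover have "ramp (real (M + k) - lam - real n) = real M - real n - \<theta>"
      using that assms by (subst ramp_eq_self) (auto simp: \<theta>_def)
    ultimately show ?thesis
      by (simp only:) (simp add: \<theta>_def algebra_simps)
  qed
  have "rho lam (real (M + k)) = 2 * (\<Sum>j<k. real j * ramp (real (M + k) - real j))
      + 2 * (\<Sum>n<M. \<theta> * (2 * real n) + \<theta> * (real k - real M + \<theta>))"
    using assms pair by (simp add: rho_eq_rho_trunc[of _ _ "M + k"] rho_trunc_split del: of_nat_add)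
  also have "(\<Sum>n<M. \<theta> * (2 * real n) + \<theta> * (real k - real M + \<theta>)) = \<theta> * real M * (lam - 1)"
    by (simp add: sum.distrib flip: sum_distrib_left)
       (simp add: double_gauss_sum_lessThan \<theta>_def algebra_simps)
  finally show ?thesis
    unfolding \<theta>_def .
qed

lemma rho_nonneg_of_nat:
  assumes "1 \<le> lam"
  shows "0 \<le> rho lam (real m)"
proof -
  define k where "k = nat \<lfloor>lam\<rfloor>"
  have k: "real k \<le> lam" "lam \<le> real k + 1"
    using assms unfolding k_def by linarith+
  have first_sum_nonneg: "0 \<le> (\<Sum>j<J. real j * ramp (t - real j))" for J t
    by (intro sum_nonneg mult_nonneg_nonneg ramp_nonneg) simp
  show ?thesis
  proof (cases "m \<le> k")
    case True
    then have "rho lam (real m) = 2 * (\<Sum>j<m. real j * ramp (real m - real j))"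
      using assms k rho_trunc_split[of m lam "real m" 0] by (simp add: rho_eq_rho_trunc[of _ _ m])
    then show ?thesis
      using first_sum_nonneg by simp
  next
    case False
    then obtain M where "m = M + k"
      by (metis add.commute le_add_diff_inverse nat_le_linear)
    then show ?thesis
      using rho_of_nat_add[of lam k M] first_sum_nonneg assms k by simp
  qed
qed

lemma rho_trunc_concave_between_integers:
  assumes "0 \<le> lam" "real m \<le> t" "t \<le> real m + 1"
  shows "(real m + 1 - t) * rho_trunc lam J (real m) + (t - real m) * rho_trunc lam J (real m + 1)
      \<le> rho_trunc lam J t"
proof -
  let ?a = "real m + 1 - t" and ?b = "t - real m"
  have ab: "0 \<le> ?a" "0 \<le> ?b" "?a + ?b = 1"
    using assms by auto
  have kink_convex: "(lam + real n) * ramp (t - lam - real n)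
      \<le> ?a * ((lam + real n) * ramp (real m - lam - real n))
        + ?b * ((lam + real n) * ramp (real m + 1 - lam - real n))" for n
  proof -
    have "ramp (t - lam - real n) = ramp (?a * (real m - lam - real n) + ?b * (real m + 1 - lam - real n))"
      by (simp add: algebra_simps)
    also have "\<dots> \<le> ?a * ramp (real m - lam - real n) + ?b * ramp (real m + 1 - lam - real n)"
      by (rule ramp_convex[OF ab])
    finally have "(lam + real n) * ramp (t - lam - real n)
        \<le> (lam + real n) * (?a * ramp (real m - lam - real n) + ?b * ramp (real m + 1 - lam - real n))"
      using assms by (simp add: mult_left_mono)
    then show ?thesis
      by (simp add: algebra_simps)
  qed
  have "(\<Sum>j<J. real j * ramp (t - real j))
      = ?a * (\<Sum>j<J. real j * ramp (real m - real j)) + ?b * (\<Sum>j<J. real j * ramp (real m + 1 - real j))"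
    unfolding sum_distrib_left sum.distrib[symmetric] ramp_affine_between_integers[OF assms(2,3)]
    by (simp add: algebra_simps)
  moreover have "(\<Sum>n<J. (lam + real n) * ramp (t - lam - real n))
      \<le> ?a * (\<Sum>n<J. (lam + real n) * ramp (real m - lam - real n))
        + ?b * (\<Sum>n<J. (lam + real n) * ramp (real m + 1 - lam - real n))"
    unfolding sum_distrib_left sum.distrib[symmetric] by (rule sum_mono[OF kink_convex])
  ultimately show ?thesis
    unfolding rho_trunc_def by (simp add: algebra_simps)
qed

lemma rho_nonneg:
  assumes "1 \<le> lam"
  shows "0 \<le> rho lam t"
proof (cases "t < 0")
  case True
  then show ?thesis
    using assms by (simp add: rho_eq_rho_trunc[of _ _ 0] rho_trunc_def)
next
  case False
  define m where "m = nat \<lfloor>t\<rfloor>"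
  have m: "real m \<le> t" "t \<le> real m + 1"
    using False unfolding m_def by linarith+
  have "rho lam t = rho_trunc lam (Suc m) t"
    "rho lam (real m) = rho_trunc lam (Suc m) (real m)"
    "rho lam (real m + 1) = rho_trunc lam (Suc m) (real m + 1)"
    using assms m by (simp_all add: rho_eq_rho_trunc)
  moreover have "0 \<le> rho lam (real m)" "0 \<le> rho lam (real m + 1)"
    using rho_nonneg_of_nat[OF assms, of m] rho_nonneg_of_nat[OF assms, of "Suc m"]
    by (simp_all add: add.commute)
  ultimately show ?thesis
    using rho_trunc_concave_between_integers[of lam m t "Suc m"] assms m
    by (smt (verit) mult_nonneg_nonneg)
qed

lemma rho_measurable [measurable]:
  assumes "0 < lam"
  shows "rho lam \<in> borel_measurable borel"
proof (rule borel_measurable_LIMSEQ_real)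
  show "(\<lambda>J. rho_trunc lam J t) \<longlonglongrightarrow> rho lam t" for t
  proof (rule tendsto_eventually)
    show "\<forall>\<^sub>F J in sequentially. rho_trunc lam J t = rho lam t"
      using eventually_ge_at_top[of "nat \<lceil>t\<rceil>"]
      by eventually_elim (use assms in \<open>auto intro!: rho_eq_rho_trunc[symmetric] simp: le_nat_iff\<close>)
  qed
qed (unfold rho_trunc_def ramp_def, measurable)

section \<open>Integrating the density against the kernel\<close>

definition rho_kernel_integral :: "real \<Rightarrow> nat \<Rightarrow> real \<Rightarrow> nat \<Rightarrow> real" where
  "rho_kernel_integral lam k x M =
      (\<Sum>j<k. ramp_kernel_integral (real M + real k) x (real j))
    + (\<Sum>n<M. ramp_kernel_integral (real M + real k) x (real n + real k)
            - ramp_kernel_integral (real M + real k) x (real n + lam))"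

lemma has_integral_rho_kernel:
  assumes "0 < lam" "real k \<le> lam" "lam \<le> real k + 1" "0 < x"
  shows "((\<lambda>t. rho lam t / (t + x)^3) has_integral rho_kernel_integral lam k x M) {0..real M + real k}"
proof -
  let ?K = "\<lambda>a t. 2 * a * ramp (t - a) / (t + x)^3"
  have "((\<lambda>t. (\<Sum>j<k. ?K (real j) t) + (\<Sum>n<M. ?K (real n + real k) t - ?K (real n + lam) t))
      has_integral rho_kernel_integral lam k x M) {0..real M + real k}"
    unfolding rho_kernel_integral_def using assms
    by (intro has_integral_add has_integral_sum has_integral_diff has_integral_ramp_kernel) auto
  moreover have "(\<Sum>j<k. ?K (real j) t) + (\<Sum>n<M. ?K (real n + real k) t - ?K (real n + lam) t)
      = rho lam t / (t + x)^3" if "t \<in> {0..real M + real k}" for t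
  proof -
    have "rho lam t = rho_trunc lam (M + k) t"
      using assms that by (intro rho_eq_rho_trunc) auto
    also have "\<dots> = 2 * (\<Sum>j<k. real j * ramp (t - real j))
        + 2 * (\<Sum>n<M. real (n + k) * ramp (t - real (n + k)) - (lam + real n) * ramp (t - lam - real n))"
      using assms that by (intro rho_trunc_split) auto
    finally have "rho lam t / (t + x)^3
        = 2 * (\<Sum>j<k. real j * ramp (t - real j)) / (t + x)^3
        + 2 * (\<Sum>n<M. real (n + k) * ramp (t - real (n + k)) - (lam + real n) * ramp (t - lam - real n))
          / (t + x)^3"
      by (simp add: add_divide_distrib)
    also have "2 * (\<Sum>j<k. real j * ramp (t - real j)) / (t + x)^3 = (\<Sum>j<k. ?K (real j) t)"
      by (simp add: sum_distrib_left sum_divide_distrib mult.assoc)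
    also have "2 * (\<Sum>n<M. real (n + k) * ramp (t - real (n + k)) - (lam + real n) * ramp (t - lam - real n))
          / (t + x)^3 = (\<Sum>n<M. ?K (real n + real k) t - ?K (real n + lam) t)"
      by (simp add: sum_distrib_left sum_divide_distrib right_diff_distrib diff_divide_distrib
          diff_diff_eq add.commute mult.assoc distrib_left distrib_right)
    finally show ?thesis
      by (rule sym)
  qed
  ultimately show ?thesis
    by (rule has_integral_eq[rotated])
qed

lemma rho_kernel_integral_tendsto:
  assumes "0 \<le> lam" "0 < x"
  shows "rho_kernel_integral lam k x \<longlonglongrightarrow> lam + x * (Digamma x - Digamma (x + lam))"
proof -
  have head: "(\<lambda>M. \<Sum>j<k. ramp_kernel_integral (real M + real k) x (real j))
      \<longlonglongrightarrow> (\<Sum>j<k. real j / (real j + x))"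
    by (intro tendsto_sum ramp_kernel_integral_tendsto)
  have boundary: "(\<lambda>M. (lam - real k) * real M * (real M + real k + x - lam + 1)
      / (real M + real k + x)^2) \<longlonglongrightarrow> lam - real k"
    by real_asymp
  have digamma: "(\<lambda>M. \<Sum>n<M. 1 / (x + lam + real n) - 1 / (x + real k + real n))
      \<longlonglongrightarrow> Digamma (x + real k) - Digamma (x + lam)"
    using tendsto_diff[OF Digamma_LIMSEQ[of "x + real k"] Digamma_LIMSEQ[of "x + lam"]] assms
    by (simp add: sum_subtractf inverse_eq_divide)
  have "rho_kernel_integral lam k x = (\<lambda>M. (\<Sum>j<k. ramp_kernel_integral (real M + real k) x (real j))
      + ((lam - real k) * real M * (real M + real k + x - lam + 1) / (real M + real k + x)^2
         + x * (\<Sum>n<M. 1 / (x + lam + real n) - 1 / (x + real k + real n))))"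
    using sum_ramp_kernel_integral_pairs[of x "real k" lam] assms
    by (auto simp: rho_kernel_integral_def add_ac)
  also have "\<dots> \<longlonglongrightarrow> (\<Sum>j<k. real j / (real j + x))
      + (lam - real k + x * (Digamma (x + real k) - Digamma (x + lam)))"
    by (intro tendsto_add tendsto_mult_left head boundary digamma)
  also have "(\<Sum>j<k. real j / (real j + x)) + (lam - real k + x * (Digamma (x + real k) - Digamma (x + lam)))
      = lam + x * (Digamma x - Digamma (x + lam))"
    using Polygamma_plus_of_nat[of k x 0] sum_of_nat_div_of_nat_add[of x k] assms
    by (simp add: algebra_simps)
  finally show ?thesis .
qed

lemma has_bochner_integral_rho_kernel:
  assumes "1 \<le> lam" "0 < x"
  shows "has_bochner_integral (restrict_space lborel {0..}) (\<lambda>t. rho lam t / (t + x)^3)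
    (lam + x * (Digamma x - Digamma (x + lam)))"
proof -
  define k where "k = nat \<lfloor>lam\<rfloor>"
  have k: "real k \<le> lam" "lam \<le> real k + 1"
    using assms unfolding k_def by linarith+
  have [measurable]: "rho lam \<in> borel_measurable borel"
    using assms by (intro rho_measurable) simp
  show ?thesis
  proof (rule has_bochner_integral_atLeast_monotone_limit)
    show "((\<lambda>t. rho lam t / (t + x)^3) has_integral rho_kernel_integral lam k x M)
        {0..real M + real k}" for M
      using assms k by (intro has_integral_rho_kernel) auto
    show "rho_kernel_integral lam k x \<longlonglongrightarrow> lam + x * (Digamma x - Digamma (x + lam))"
      using assms by (intro rho_kernel_integral_tendsto) auto
    show "filterlim (\<lambda>M. real M + real k) at_top sequentially"
      by real_asymp
    show "mono (\<lambda>M. real M + real k)"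
      by (simp add: mono_def)
    show "0 \<le> rho lam t / (t + x)^3" if "0 \<le> t" for t
      using assms that by (simp add: rho_nonneg)
    show "(\<lambda>t. rho lam t / (t + x)^3) \<in> borel_measurable borel"
      by measurable
  qed
qed

theorem lemma3p5:
  fixes lam :: real
  assumes "lam > 1"
  shows "(\<lambda>x. lam + x * (Digamma x - Digamma (x + lam))) \<in> S_class 3"
proof -
  have [measurable]: "rho lam \<in> borel_measurable borel"
    using assms by (intro rho_measurable) simp
  define \<mu> where "\<mu> = density (restrict_space lborel {0..}) (\<lambda>t. ennreal (rho lam t))"
  have "has_bochner_integral \<mu> (\<lambda>t. 1 / (t + x) powr 3) (lam + x * (Digamma x - Digamma (x + lam)))"
    if "0 < x" for x
  proof -
    have "has_bochner_integral (restrict_space lborel {0..}) (\<lambda>t. rho lam t / (t + x)^3) L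
        \<longleftrightarrow> has_bochner_integral (restrict_space lborel {0..}) (\<lambda>t. rho lam t *\<^sub>R (1 / (t + x) powr 3)) L"
      for L
      using that by (intro has_bochner_integral_cong) (auto simp: powr_numeral)
    with has_bochner_integral_rho_kernel[of lam x] assms that
    have "has_bochner_integral (restrict_space lborel {0..}) (\<lambda>t. rho lam t *\<^sub>R (1 / (t + x) powr 3))
        (lam + x * (Digamma x - Digamma (x + lam)))"
      by simp
    then show ?thesis
      unfolding \<mu>_def using assms
      by (intro has_bochner_integral_density measurable_restrict_space1) (auto simp: rho_nonneg)
  qed
  moreover have "sets \<mu> = sets (restrict_space borel {0..})"
    unfolding \<mu>_def by (simp, intro sets_restrict_space_cong) simp
  ultimately show ?thesis
    unfolding S_class_def by (auto simp: has_bochner_integral_iff intro!: exI[of _ \<mu>] exI[of _ 0])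
qed

end
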